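(* Let $n\ge 0$ and $\mathbf{x}\in\mathbb{R}^{n+1}$ with $0\le\mathbf{x}_0<\mathbf{x}_1<\dots<\mathbf{x}_n\le 1$. Define the $(n+1)\times(n+1)$ matrices (indices $0\le i,j\le n$) $$H^n_{ij}=\binom{n+1}{i+j+1},\qquad \widetilde H^n_{ij}(\mathbf{x})=\sum_{k=0}^{i+j+1}(-1)^{n-k+1}\binom{n-k+1}{n-i-j}\sigma_{n-k+1}(\mathbf{x}),$$ $$T^n_{ij}=\binom{n+1}{j-i},\qquad \widetilde T^n_{ij}(\mathbf{x})=\sum_{k=0}^{j-i}(-1)^{n-k+1}\binom{n-k+1}{j-i-k}\sigma_{n-k+1}(\mathbf{x}),$$ $$D^n(\mathbf{x})=\mathrm{diag}\Big(\prod_{i\in\{0,\dots,n\}\setminus\{j\}}(\mathbf{x}_j-\mathbf{x}_i)\Big)_{j=0}^n,\qquad \Delta^n=\mathrm{diag}\Big(\binom{n}{j}\Big)_{j=0}^n,$$ and $\widetilde V^n_{ij}(\mathbf{x})=\mathbf{x}_i^j(1-\mathbf{x}_i)^{n-j}$. Then $$(V^n(\mathbf{x}))^{-1}=(\Delta^n)^{-1}\big[\widetilde H^n(\mathbf{x})T^n-H^n\widetilde T^n(\mathbf{x})\big](\widetilde V^n(\mathbf{x}))^T(D^n(\mathbf{x}))^{-1}.$$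
   Context: $V^n(\mathbf{x})$ is the Bernstein–Vandermonde matrix with entries $V^n_{ij}(\mathbf{x})=B^n_j(\mathbf{x}_i)$, where $B^n_j(x)=\binom{n}{j}x^j(1-x)^{n-j}$. $\sigma_k(\mathbf{x})$ is the $k$-th elementary symmetric function of $\mathbf{x}_0,\dots,\mathbf{x}_n$: $\sigma_0=1$ and $\sigma_k(\mathbf{x})=\sum_{0\le i_0<\dots<i_{k-1}\le n}\mathbf{x}_{i_0}\cdots\mathbf{x}_{i_{k-1}}$ for $1\le k\le n+1$. Conventions: $\binom{a}{b}=0$ if $b<0$ or $b>a$ (in particular $T^n,\widetilde T^n$ are upper triangular, and empty sums are $0$); $0^0=1$. *)

theory Defs
  imports Complex_Main "Jordan_Normal_Form.Matrix"
begin

definition binomZ :: "int \<Rightarrow> int \<Rightarrow> real" where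
  "binomZ a b = (if 0 \<le> b \<and> b \<le> a then real (nat a choose nat b) else 0)"

text \<open>k-th elementary symmetric function of x_0,...,x_n (integer index;
  value 0 for negative k, and automatically 0 for k > n+1, 1 for k = 0).\<close>
definition esym :: "(nat \<Rightarrow> real) \<Rightarrow> nat \<Rightarrow> int \<Rightarrow> real" where
  "esym x n k = (if k < 0 then 0 else
     (\<Sum>S\<in>{S. S \<subseteq> {0..n} \<and> card S = nat k}. \<Prod>i\<in>S. x i))"

text \<open>Bernstein-Vandermonde matrix V^n(x), entries B^n_j(x_i).\<close>
definition BV :: "nat \<Rightarrow> (nat \<Rightarrow> real) \<Rightarrow> real mat" where
  "BV n x = mat (n+1) (n+1) (\<lambda>(i,j). real (n choose j) * x i ^ j * (1 - x i) ^ (n - j))"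

definition BVtil :: "nat \<Rightarrow> (nat \<Rightarrow> real) \<Rightarrow> real mat" where
  "BVtil n x = mat (n+1) (n+1) (\<lambda>(i,j). x i ^ j * (1 - x i) ^ (n - j))"

definition Hmat :: "nat \<Rightarrow> real mat" where
  "Hmat n = mat (n+1) (n+1) (\<lambda>(i,j). binomZ (int n + 1) (int i + int j + 1))"

definition Htil :: "nat \<Rightarrow> (nat \<Rightarrow> real) \<Rightarrow> real mat" where
  "Htil n x = mat (n+1) (n+1) (\<lambda>(i,j).
     \<Sum>k\<in>{0..int i + int j + 1}. (-1::real) powi (int n - k + 1)
        * binomZ (int n - k + 1) (int n - int i - int j) * esym x n (int n - k + 1))"

definition Tmat :: "nat \<Rightarrow> real mat" where
  "Tmat n = mat (n+1) (n+1) (\<lambda>(i,j). binomZ (int n + 1) (int j - int i))"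

definition Ttil :: "nat \<Rightarrow> (nat \<Rightarrow> real) \<Rightarrow> real mat" where
  "Ttil n x = mat (n+1) (n+1) (\<lambda>(i,j).
     \<Sum>k\<in>{0..int j - int i}. (-1::real) powi (int n - k + 1)
        * binomZ (int n - k + 1) (int j - int i - k) * esym x n (int n - k + 1))"

text \<open>Inverses of the diagonal matrices D^n(x) and Delta^n (their diagonal
  entries are nonzero under the hypotheses).\<close>
definition Dinv :: "nat \<Rightarrow> (nat \<Rightarrow> real) \<Rightarrow> real mat" where
  "Dinv n x = mat_diag (n+1) (\<lambda>j. 1 / (\<Prod>i\<in>{0..n} - {j}. (x j - x i)))"

definition Deltainv :: "nat \<Rightarrow> real mat" where
  "Deltainv n = mat_diag (n+1) (\<lambda>j. 1 / real (n choose j))"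

end

theory Submission
  imports Defs "Jordan_Normal_Form.Determinant"
begin

(* The matrix C = H~ T - H T~ is the Bezoutian of omega(s) = prod_i (s - x_i) and the constant 1,
   both written in the degree n+1 Bernstein basis (with coefficients coming from H~, T~ and from
   binom(n+1, _)): the form Q(s,t) = sum_{j,m} C_jm s^j (1-s)^(n-j) t^m (1-t)^(n-m) satisfies
   (s - t) Q(s,t) = omega(s) - omega(t).  Hence Q(x_i, x_l) vanishes for i ~= l and equals
   omega'(x_l) = D_ll for i = l, i.e. V~ C V~^T = D.  Since V = V~ Delta, the inverse of V is
   Delta^-1 C V~^T D^-1. *)

definition vanishes_outside :: "int \<Rightarrow> (int \<Rightarrow> 'a::zero) \<Rightarrow> bool" where
  "vanishes_outside N f \<longleftrightarrow> (\<forall>c. c < 0 \<or> N < c \<longrightarrow> f c = 0)"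

lemma vanishes_outsideD: "vanishes_outside N f \<Longrightarrow> c < 0 \<or> N < c \<Longrightarrow> f c = 0"
  unfolding vanishes_outside_def by blast

definition bezout_term ::
    "(int \<Rightarrow> 'a::comm_ring_1) \<Rightarrow> (int \<Rightarrow> 'a) \<Rightarrow> int \<Rightarrow> int \<Rightarrow> 'a" where
  "bezout_term f g s p = g p * f (s - p) - f p * g (s - p)"

(* With p = j + 1 + l this is entry (j, m) of H~ T - H T~ for f = binom(n+1, _) and g the
   Bernstein coefficients of omega. *)
definition bezout_coeff ::
    "nat \<Rightarrow> (int \<Rightarrow> 'a::comm_ring_1) \<Rightarrow> (int \<Rightarrow> 'a) \<Rightarrow> int \<Rightarrow> int \<Rightarrow> 'a" where
  "bezout_coeff n f g j m = (\<Sum>p\<in>{j+1..j+1+int n}. bezout_term f g (j+1+m) p)"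

lemma bezout_term_reflect: "bezout_term f g s (s - p) = - bezout_term f g s p"
  unfolding bezout_term_def by (simp add: algebra_simps)

lemma bezout_term_eq_0:
  assumes f: "vanishes_outside N f" and g: "vanishes_outside N g"
    and p: "p < 0 \<or> N < p \<or> s - p < 0 \<or> N < s - p"
  shows "bezout_term f g s p = 0"
  using p vanishes_outsideD[OF f, of p] vanishes_outsideD[OF g, of p]
    vanishes_outsideD[OF f, of "s - p"] vanishes_outsideD[OF g, of "s - p"]
  unfolding bezout_term_def by auto

lemma sum_bezout_term_eq_0:
  fixes f g :: "int \<Rightarrow> 'a::field_char_0"
  assumes f: "vanishes_outside N f" and g: "vanishes_outside N g"
    and I: "finite I" "{max 0 (s - N)..min N s} \<subseteq> I"
  shows "(\<Sum>p\<in>I. bezout_term f g s p) = 0"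
proof -
  \<comment> \<open>The reflection \<open>p \<mapsto> s - p\<close> maps the support window onto itself and negates each term.\<close>
  let ?J = "{max 0 (s - N)..min N s}"
  have "(\<Sum>p\<in>I. bezout_term f g s p) = (\<Sum>p\<in>?J. bezout_term f g s p)"
    by (rule sum.mono_neutral_right[OF I]) (auto intro: bezout_term_eq_0[OF f g])
  moreover have "(\<Sum>p\<in>?J. bezout_term f g s p) = (\<Sum>p\<in>?J. bezout_term f g s (s - p))"
    by (rule sum.reindex_bij_witness[of _ "\<lambda>p. s - p" "\<lambda>p. s - p"]) auto
  then have "(\<Sum>p\<in>?J. bezout_term f g s p) = - (\<Sum>p\<in>?J. bezout_term f g s p)"
    unfolding bezout_term_reflect sum_negf .
  ultimately show ?thesis by simp
qed

lemma bezout_coeff_telescope: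
  "bezout_coeff n f g (a - 1) b - bezout_coeff n f g a (b - 1)
     = bezout_term f g (a + b) a - bezout_term f g (a + b) (a + int n + 1)"
proof -
  let ?h = "bezout_term f g (a + b)"
  have "{a..a + int n + 1} = insert a {a + 1..a + int n + 1}" by auto
  then have "sum ?h {a..a + int n + 1} = ?h a + sum ?h {a + 1..a + int n + 1}" by simp
  moreover have "{a..a + int n + 1} = insert (a + int n + 1) {a..a + int n}" by auto
  then have "sum ?h {a..a + int n + 1} = ?h (a + int n + 1) + sum ?h {a..a + int n}" by simp
  ultimately show ?thesis unfolding bezout_coeff_def by (simp add: algebra_simps)
qed

lemma bezout_coeff_eq_0:
  fixes f g :: "int \<Rightarrow> 'a::field_char_0"
  assumes "vanishes_outside (int n + 1) f" "vanishes_outside (int n + 1) g"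
    and "{max 0 (j + m - int n)..min (int n + 1) (j + 1 + m)} \<subseteq> {j + 1..j + 1 + int n}"
  shows "bezout_coeff n f g j m = 0"
  unfolding bezout_coeff_def by (rule sum_bezout_term_eq_0) (use assms in auto)

lemma bezout_coeff_boundary:
  fixes f g :: "int \<Rightarrow> 'a::field_char_0"
  assumes f: "vanishes_outside (int n + 1) f" and g: "vanishes_outside (int n + 1) g"
    and j: "-1 \<le> j" "j \<le> int n + 1" and m: "-1 \<le> m" "m \<le> int n + 1"
    and out: "\<not> (0 \<le> j \<and> j \<le> int n \<and> 0 \<le> m \<and> m \<le> int n)"
  shows "bezout_coeff n f g j m
    = (if j = -1 \<and> m = int n + 1 then - bezout_term f g (int n + 1) (int n + 1) else 0)"
proof -
  consider "j = -1" "m = int n + 1" | "m = -1" | "j = int n + 1"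
    | "j = -1" "0 \<le> m" "m \<le> int n" | "m = int n + 1" "0 \<le> j" "j \<le> int n"
    using j m out by linarith
  then show ?thesis
  proof cases
    case 1
    have "{0..int n + 1} = insert (int n + 1) {0..int n}" by auto
    moreover have "(\<Sum>p\<in>{0..int n + 1}. bezout_term f g (int n + 1) p) = 0"
      by (rule sum_bezout_term_eq_0[OF f g]) auto
    ultimately show ?thesis
      using 1 by (simp add: bezout_coeff_def eq_neg_iff_add_eq_0 add.commute)
  next
    case 2
    then have "bezout_coeff n f g j m = 0" unfolding bezout_coeff_def
      by (intro sum.neutral ballI bezout_term_eq_0[OF f g]) auto
    with 2 show ?thesis by auto
  next
    case 3
    then have "bezout_coeff n f g j m = 0" unfolding bezout_coeff_def
      by (intro sum.neutral ballI bezout_term_eq_0[OF f g]) auto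
    with 3 show ?thesis by auto
  qed (auto intro!: bezout_coeff_eq_0[OF f g])
qed

definition bezout_coeff_ext ::
    "nat \<Rightarrow> (int \<Rightarrow> 'a::comm_ring_1) \<Rightarrow> (int \<Rightarrow> 'a) \<Rightarrow> int \<Rightarrow> int \<Rightarrow> 'a" where
  "bezout_coeff_ext n f g j m =
     (if 0 \<le> j \<and> j \<le> int n \<and> 0 \<le> m \<and> m \<le> int n then bezout_coeff n f g j m else 0)"

lemma bezout_coeff_ext_diff:
  fixes f g :: "int \<Rightarrow> 'a::field_char_0"
  assumes f: "vanishes_outside (int n + 1) f" and g: "vanishes_outside (int n + 1) g"
    and a: "0 \<le> a" "a \<le> int n + 1" and b: "0 \<le> b" "b \<le> int n + 1"
  shows "bezout_coeff_ext n f g (a - 1) b - bezout_coeff_ext n f g a (b - 1)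
    = bezout_term f g (a + b) a"
proof -
  let ?c = "- bezout_term f g (int n + 1) (int n + 1)"
  have ext: "bezout_coeff_ext n f g j m
      = bezout_coeff n f g j m - (if j = -1 \<and> m = int n + 1 then ?c else 0)"
    if "-1 \<le> j" "j \<le> int n + 1" "-1 \<le> m" "m \<le> int n + 1" for j m
    using bezout_coeff_boundary[OF f g that] unfolding bezout_coeff_ext_def by auto
  have "bezout_term f g (a + b) (a + int n + 1) = (if a = 0 \<and> b = int n + 1 then - ?c else 0)"
    using a b by (auto intro: bezout_term_eq_0[OF f g])
  then show ?thesis
    using bezout_coeff_telescope[of n f g a b] ext[of "a - 1" b] ext[of a "b - 1"] a b
    by (auto simp: algebra_simps split: if_splits)
qed

definition bernstein_monomial :: "nat \<Rightarrow> 'a::comm_ring_1 \<Rightarrow> nat \<Rightarrow> 'a" where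
  "bernstein_monomial n s j = s ^ j * (1 - s) ^ (n - j)"

definition bernstein_sum :: "nat \<Rightarrow> (int \<Rightarrow> 'a::comm_ring_1) \<Rightarrow> 'a \<Rightarrow> 'a" where
  "bernstein_sum N c s = (\<Sum>a\<le>N. c (int a) * bernstein_monomial N s a)"

definition bezout_form ::
    "nat \<Rightarrow> (int \<Rightarrow> 'a::comm_ring_1) \<Rightarrow> (int \<Rightarrow> 'a) \<Rightarrow> 'a \<Rightarrow> 'a \<Rightarrow> 'a" where
  "bezout_form n f g s t = (\<Sum>j\<le>n. \<Sum>m\<le>n.
     bezout_coeff n f g (int j) (int m) * (bernstein_monomial n s j * bernstein_monomial n t m))"

lemma bernstein_monomial_diff_mult:
  assumes "j \<le> n" "m \<le> n"
  shows "(s - t) * (bernstein_monomial n s j * bernstein_monomial n t m)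
    = bernstein_monomial (Suc n) s (Suc j) * bernstein_monomial (Suc n) t m
      - bernstein_monomial (Suc n) s j * bernstein_monomial (Suc n) t (Suc m)"
proof -
  have "Suc n - j = Suc (n - j)" "Suc n - m = Suc (n - m)" using assms by auto
  moreover have "s - t = s * (1 - t) - (1 - s) * t" by (simp add: algebra_simps)
  ultimately show ?thesis unfolding bernstein_monomial_def by (simp add: algebra_simps)
qed

lemma sum_bezout_coeff_ext_shift_left:
  "(\<Sum>a\<le>Suc n. \<Sum>b\<le>Suc n. bezout_coeff_ext n f g (int a - 1) (int b) * (u a * v b))
    = (\<Sum>j\<le>n. \<Sum>m\<le>n. bezout_coeff n f g (int j) (int m) * (u (Suc j) * v m))"
proof -
  have "(\<Sum>a\<le>Suc n. \<Sum>b\<le>Suc n. bezout_coeff_ext n f g (int a - 1) (int b) * (u a * v b))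
      = (\<Sum>j\<le>n. \<Sum>b\<le>Suc n. bezout_coeff_ext n f g (int j) (int b) * (u (Suc j) * v b))"
    by (subst sum.atMost_Suc_shift) (simp add: bezout_coeff_ext_def)
  also have "\<dots> = (\<Sum>j\<le>n. \<Sum>m\<le>n. bezout_coeff n f g (int j) (int m) * (u (Suc j) * v m))"
    by (rule sum.cong[OF refl]) (auto simp: bezout_coeff_ext_def intro!: sum.cong)
  finally show ?thesis .
qed

lemma sum_bezout_coeff_ext_shift_right:
  "(\<Sum>a\<le>Suc n. \<Sum>b\<le>Suc n. bezout_coeff_ext n f g (int a) (int b - 1) * (u a * v b))
    = (\<Sum>j\<le>n. \<Sum>m\<le>n. bezout_coeff n f g (int j) (int m) * (u j * v (Suc m)))"
proof -
  have "(\<Sum>a\<le>Suc n. \<Sum>b\<le>Suc n. bezout_coeff_ext n f g (int a) (int b - 1) * (u a * v b))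
      = (\<Sum>j\<le>n. \<Sum>b\<le>Suc n. bezout_coeff_ext n f g (int j) (int b - 1) * (u j * v b))"
    by (simp add: bezout_coeff_ext_def)
  also have "\<dots> = (\<Sum>j\<le>n. \<Sum>m\<le>n. bezout_coeff_ext n f g (int j) (int m) * (u j * v (Suc m)))"
    by (rule sum.cong[OF refl], subst sum.atMost_Suc_shift) (simp add: bezout_coeff_ext_def)
  also have "\<dots> = (\<Sum>j\<le>n. \<Sum>m\<le>n. bezout_coeff n f g (int j) (int m) * (u j * v (Suc m)))"
    by (intro sum.cong refl) (auto simp: bezout_coeff_ext_def)
  finally show ?thesis .
qed

lemma bezout_form_identity:
  fixes f g :: "int \<Rightarrow> 'a::field_char_0"
  assumes f: "vanishes_outside (int n + 1) f" and g: "vanishes_outside (int n + 1) g"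
  shows "(s - t) * bezout_form n f g s t
    = bernstein_sum (Suc n) g s * bernstein_sum (Suc n) f t
      - bernstein_sum (Suc n) f s * bernstein_sum (Suc n) g t"
proof -
  let ?Y = "bernstein_monomial (Suc n)"
  have "(s - t) * bezout_form n f g s t = (\<Sum>j\<le>n. \<Sum>m\<le>n. bezout_coeff n f g (int j) (int m)
      * (?Y s (Suc j) * ?Y t m - ?Y s j * ?Y t (Suc m)))"
    unfolding bezout_form_def sum_distrib_left
    by (intro sum.cong refl) (simp add: bernstein_monomial_diff_mult mult.left_commute)
  also have "\<dots> = (\<Sum>a\<le>Suc n. \<Sum>b\<le>Suc n.
      (bezout_coeff_ext n f g (int a - 1) (int b) - bezout_coeff_ext n f g (int a) (int b - 1))
      * (?Y s a * ?Y t b))"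
    by (simp only: left_diff_distrib right_diff_distrib sum_subtractf
        sum_bezout_coeff_ext_shift_left sum_bezout_coeff_ext_shift_right)
  also have "\<dots> = (\<Sum>a\<le>Suc n. \<Sum>b\<le>Suc n. (g a * ?Y s a) * (f b * ?Y t b) - (f a * ?Y s a) * (g b * ?Y t b))"
    by (intro sum.cong refl) (simp add: bezout_coeff_ext_diff[OF f g] bezout_term_def algebra_simps)
  also have "\<dots> = bernstein_sum (Suc n) g s * bernstein_sum (Suc n) f t
      - bernstein_sum (Suc n) f s * bernstein_sum (Suc n) g t"
    by (simp only: bernstein_sum_def sum_product sum_subtractf)
  finally show ?thesis .
qed

lemma vanishes_outside_binomZ: "vanishes_outside N (binomZ N)"
  unfolding vanishes_outside_def binomZ_def by auto

lemma bernstein_sum_binomZ: "bernstein_sum N (binomZ (int N)) s = (1::real)"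
proof -
  have "bernstein_sum N (binomZ (int N)) s = (\<Sum>a\<le>N. of_nat (N choose a) * s ^ a * (1 - s) ^ (N - a))"
    unfolding bernstein_sum_def bernstein_monomial_def
    by (intro sum.cong refl) (auto simp: binomZ_def)
  also have "\<dots> = (s + (1 - s)) ^ N" by (rule binomial_ring [symmetric])
  finally show ?thesis by simp
qed

definition monomial_to_bernstein :: "nat \<Rightarrow> (int \<Rightarrow> real) \<Rightarrow> int \<Rightarrow> real" where
  "monomial_to_bernstein N a c = (\<Sum>k\<in>{0..c}. a k * binomZ (int N - k) (c - k))"

lemma vanishes_outside_monomial_to_bernstein:
  "vanishes_outside (int N) (monomial_to_bernstein N a)"
  unfolding vanishes_outside_def monomial_to_bernstein_def
  by (auto intro!: sum.neutral simp: binomZ_def)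

lemma monomial_to_bernstein_nat:
  assumes "c \<le> N"
  shows "monomial_to_bernstein N a (int c) = (\<Sum>k\<le>c. a (int k) * of_nat ((N - k) choose (c - k)))"
proof -
  have "{0..int c} = int ` {..c}" by (auto simp: image_iff intro!: bexI[of _ "nat _"])
  then have "monomial_to_bernstein N a (int c) = (\<Sum>k\<le>c. a (int k) * binomZ (int N - int k) (int c - int k))"
    unfolding monomial_to_bernstein_def by (simp add: sum.reindex)
  also have "\<dots> = (\<Sum>k\<le>c. a (int k) * of_nat ((N - k) choose (c - k)))"
    using assms by (intro sum.cong refl) (auto simp: binomZ_def nat_diff_distrib)
  finally show ?thesis .
qed

lemma bernstein_sum_monomial_to_bernstein:
  "bernstein_sum N (monomial_to_bernstein N a) s = (\<Sum>k\<le>N. a (int k) * s ^ k)"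
proof -
  define h where "h k l = a (int k) * of_nat ((N - k) choose l) * s ^ (k + l) * (1 - s) ^ (N - k - l)"
    for k l
  have "bernstein_sum N (monomial_to_bernstein N a) s = (\<Sum>c\<le>N. \<Sum>k\<le>c. h k (c - k))"
    unfolding bernstein_sum_def bernstein_monomial_def
    by (intro sum.cong refl)
      (auto simp: monomial_to_bernstein_nat sum_distrib_right h_def intro!: sum.cong)
  also have "\<dots> = (\<Sum>(k, l)\<in>{(k, l). k + l \<le> N}. h k l)"
    by (rule sum.triangle_reindex_eq [symmetric])
  also have "{(k, l). k + l \<le> N} = Sigma {..N} (\<lambda>k. {..N - k})" by auto
  also have "(\<Sum>(k, l)\<in>Sigma {..N} (\<lambda>k. {..N - k}). h k l) = (\<Sum>k\<le>N. \<Sum>l\<le>N - k. h k l)"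
    by (rule sum.Sigma [symmetric]) auto
  also have "\<dots> = (\<Sum>k\<le>N. a (int k) * s ^ k)"
  proof (intro sum.cong refl)
    fix k
    have "(\<Sum>l\<le>N - k. h k l)
        = a (int k) * s ^ k * (\<Sum>l\<le>N - k. of_nat ((N - k) choose l) * s ^ l * (1 - s) ^ (N - k - l))"
      unfolding h_def sum_distrib_left by (intro sum.cong refl) (simp add: power_add algebra_simps)
    also have "\<dots> = a (int k) * s ^ k * (s + (1 - s)) ^ (N - k)"
      by (simp only: binomial_ring)
    finally show "(\<Sum>l\<le>N - k. h k l) = a (int k) * s ^ k" by simp
  qed
  finally show ?thesis .
qed

definition node_poly_coeff :: "(nat \<Rightarrow> real) \<Rightarrow> nat \<Rightarrow> int \<Rightarrow> real" where
  "node_poly_coeff x n k = (-1) powi (int n - k + 1) * esym x n (int n - k + 1)"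

lemma prod_diff_nodes_eq_sum:
  "(\<Prod>i\<in>{0..n}. s - x i) = (\<Sum>k\<le>Suc n. node_poly_coeff x n (int k) * s ^ k)"
proof -
  have "(\<Prod>i\<in>{0..n}. s - x i) = (\<Prod>i\<in>{0..n}. - x i + s)" by simp
  also have "\<dots> = (\<Sum>X\<in>Pow {0..n}. (\<Prod>i\<in>X. - x i) * (\<Prod>i\<in>{0..n} - X. s))"
    by (rule prod_add) simp
  also have "\<dots> = (\<Sum>X\<in>Pow {0..n}. (-1) ^ card X * (\<Prod>i\<in>X. x i) * s ^ (Suc n - card X))"
  proof (intro sum.cong refl)
    fix X assume "X \<in> Pow {0..n}"
    then have "X \<subseteq> {0..n}" "finite X" by (auto intro: finite_subset)
    then show "(\<Prod>i\<in>X. - x i) * (\<Prod>i\<in>{0..n} - X. s)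
        = (-1) ^ card X * (\<Prod>i\<in>X. x i) * s ^ (Suc n - card X)"
      by (simp add: prod_uminus card_Diff_subset)
  qed
  also have "\<dots> = (\<Sum>c\<le>Suc n. \<Sum>X\<in>{X\<in>Pow {0..n}. card X = c}.
      (-1) ^ card X * (\<Prod>i\<in>X. x i) * s ^ (Suc n - card X))"
    by (rule sum.group [symmetric]) (auto intro: card_mono [where B = "{0..n}", simplified])
  also have "\<dots> = (\<Sum>c\<le>Suc n. (-1) ^ c * esym x n (int c) * s ^ (Suc n - c))"
  proof (intro sum.cong refl)
    fix c
    have "{X\<in>Pow {0..n}. card X = c} = {S. S \<subseteq> {0..n} \<and> card S = nat (int c)}" by auto
    then show "(\<Sum>X\<in>{X\<in>Pow {0..n}. card X = c}. (-1) ^ card X * (\<Prod>i\<in>X. x i) * s ^ (Suc n - card X))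
        = (-1) ^ c * esym x n (int c) * s ^ (Suc n - c)"
      by (simp add: esym_def sum_distrib_left sum_distrib_right)
  qed
  also have "\<dots> = (\<Sum>k\<le>Suc n. node_poly_coeff x n (int k) * s ^ k)"
  proof -
    have "(\<Sum>c\<in>{0..Suc n}. (-1) ^ c * esym x n (int c) * s ^ (Suc n - c))
        = (\<Sum>k\<in>{0..Suc n}. (-1) ^ (Suc n + 0 - k) * esym x n (int (Suc n + 0 - k))
            * s ^ (Suc n - (Suc n + 0 - k)))"
      by (rule sum.atLeastAtMost_rev)
    also have "\<dots> = (\<Sum>k\<in>{0..Suc n}. node_poly_coeff x n (int k) * s ^ k)"
    proof (intro sum.cong refl)
      fix k assume k: "k \<in> {0..Suc n}"
      then have e: "int n - int k + 1 = int (Suc n - k)" by auto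
      show "(-1) ^ (Suc n + 0 - k) * esym x n (int (Suc n + 0 - k)) * s ^ (Suc n - (Suc n + 0 - k))
          = node_poly_coeff x n (int k) * s ^ k"
        unfolding node_poly_coeff_def e power_int_of_nat using k by simp
    qed
    finally show ?thesis by (simp only: atMost_atLeast0)
  qed
  finally show ?thesis .
qed

definition node_bezout_form :: "nat \<Rightarrow> (nat \<Rightarrow> real) \<Rightarrow> real \<Rightarrow> real \<Rightarrow> real" where
  "node_bezout_form n x =
     bezout_form n (binomZ (int n + 1)) (monomial_to_bernstein (Suc n) (node_poly_coeff x n))"

lemma node_bezout_form_identity:
  "(s - t) * node_bezout_form n x s t = (\<Prod>i\<in>{0..n}. s - x i) - (\<Prod>i\<in>{0..n}. t - x i)"
proof -
  have f: "vanishes_outside (int n + 1) (binomZ (int n + 1))"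
    by (rule vanishes_outside_binomZ)
  have g: "vanishes_outside (int n + 1) (monomial_to_bernstein (Suc n) (node_poly_coeff x n))"
    using vanishes_outside_monomial_to_bernstein[of "Suc n"] by (simp add: add.commute)
  have one: "bernstein_sum (Suc n) (binomZ (int n + 1)) s = 1" for s
    using bernstein_sum_binomZ[of "Suc n" s] by (simp add: add.commute)
  show ?thesis
    using bezout_form_identity[OF f g, of s t]
    unfolding node_bezout_form_def bernstein_sum_monomial_to_bernstein prod_diff_nodes_eq_sum one
    by simp
qed

lemma isCont_eq_if_eq_punctured:
  fixes f g :: "real \<Rightarrow> real"
  assumes "isCont f a" "isCont g a" "\<And>s. s \<noteq> a \<Longrightarrow> f s = g s"
  shows "f a = g a"
proof -
  have "eventually (\<lambda>s. f s = g s) (at a)"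
    by (simp add: eventually_at_filter assms(3))
  then have "(f \<longlongrightarrow> g a) (at a)"
    using assms(2) tendsto_cong unfolding isCont_def by blast
  with assms(1) show ?thesis unfolding isCont_def using LIM_unique by blast
qed

lemma node_bezout_form_at_nodes:
  assumes x: "inj_on x {0..n}" and "i \<le> n" "l \<le> n"
  shows "node_bezout_form n x (x i) (x l) = (if i = l then \<Prod>r\<in>{0..n} - {l}. x l - x r else 0)"
proof (cases "i = l")
  case True
  let ?P = "\<lambda>s. \<Prod>r\<in>{0..n} - {l}. s - x r"
  have "node_bezout_form n x s (x l) = ?P s" if "s \<noteq> x l" for s
  proof -
    have 1: "(\<Prod>r\<in>{0..n}. s - x r) = (s - x l) * ?P s" using \<open>l \<le> n\<close> by (simp add: prod.remove)
    have 2: "(\<Prod>r\<in>{0..n}. x l - x r) = 0" using \<open>l \<le> n\<close> by (auto intro!: prod_zero)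
    show ?thesis using node_bezout_form_identity[of s "x l" n x] that unfolding 1 2 by simp
  qed
  moreover have "isCont (\<lambda>s. node_bezout_form n x s (x l)) (x l)"
    unfolding node_bezout_form_def bezout_form_def bernstein_monomial_def
    by (intro continuous_intros)
  moreover have "isCont ?P (x l)" by (intro continuous_intros)
  ultimately have "node_bezout_form n x (x l) (x l) = ?P (x l)"
    using isCont_eq_if_eq_punctured by blast
  with True show ?thesis by simp
next
  case False
  then have "x i \<noteq> x l" using x assms by (auto dest: inj_onD)
  moreover have 1: "(\<Prod>r\<in>{0..n}. x i - x r) = 0" and 2: "(\<Prod>r\<in>{0..n}. x l - x r) = 0"
    using assms by (auto intro!: prod_zero)
  ultimately show ?thesis
    using node_bezout_form_identity[of "x i" "x l" n x] False unfolding 1 2 by simp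
qed

lemma binomZ_sym: "binomZ a b = binomZ a (a - b)"
  unfolding binomZ_def by (auto simp: nat_diff_distrib binomial_symmetric [symmetric])

lemma index_Htil:
  assumes "j < n + 1" "l < n + 1"
  shows "Htil n x $$ (j, l) = monomial_to_bernstein (Suc n) (node_poly_coeff x n) (int j + int l + 1)"
  using assms unfolding Htil_def monomial_to_bernstein_def node_poly_coeff_def
  by (simp, intro sum.cong refl) (subst binomZ_sym, simp add: algebra_simps)

lemma index_Ttil:
  assumes "j < n + 1" "l < n + 1"
  shows "Ttil n x $$ (j, l) = monomial_to_bernstein (Suc n) (node_poly_coeff x n) (int l - int j)"
  using assms unfolding Ttil_def monomial_to_bernstein_def node_poly_coeff_def
  by (simp add: algebra_simps)

lemma index_Htil_Tmat_minus_Hmat_Ttil: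
  assumes j: "j < n + 1" and m: "m < n + 1"
  shows "(Htil n x * Tmat n - Hmat n * Ttil n x) $$ (j, m) = bezout_coeff n (binomZ (int n + 1))
           (monomial_to_bernstein (Suc n) (node_poly_coeff x n)) (int j) (int m)"
proof -
  let ?f = "binomZ (int n + 1)" and ?g = "monomial_to_bernstein (Suc n) (node_poly_coeff x n)"
  have "(Htil n x * Tmat n - Hmat n * Ttil n x) $$ (j, m)
      = (\<Sum>l<n + 1. ?g (int j + int l + 1) * ?f (int m - int l) - ?f (int j + int l + 1) * ?g (int m - int l))"
  proof -
    have "dim_row (Htil n x) = n + 1" "dim_col (Htil n x) = n + 1"
      and "dim_row (Ttil n x) = n + 1" "dim_col (Ttil n x) = n + 1"
      by (simp_all add: Htil_def Ttil_def)
    then show ?thesis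
      using assms by (auto simp: Tmat_def Hmat_def scalar_prod_def atLeast0LessThan
          index_Htil index_Ttil sum_subtractf intro!: sum.cong)
  qed
  also have "\<dots> = bezout_coeff n ?f ?g (int j) (int m)"
    unfolding bezout_coeff_def bezout_term_def
    by (rule sum.reindex_bij_witness[of _ "\<lambda>p. nat (p - int j - 1)" "\<lambda>l. int j + 1 + int l"])
      (auto simp: algebra_simps)
  finally show ?thesis .
qed

lemma BV_mult_Deltainv: "BV n x * Deltainv n = BVtil n x"
  unfolding Deltainv_def
  by (subst mat_diag_mult_right[of _ "n + 1"]) (auto simp: BV_def BVtil_def intro!: eq_matI)

lemma index_BVtil_mult_transpose:
  assumes "C \<in> carrier_mat (n + 1) (n + 1)" "i < n + 1" "l < n + 1"
  shows "(BVtil n x * C * transpose_mat (BVtil n x)) $$ (i, l)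
    = (\<Sum>j\<le>n. \<Sum>m\<le>n. C $$ (j, m) * (bernstein_monomial n (x i) j * bernstein_monomial n (x l) m))"
proof -
  have "(BVtil n x * C * transpose_mat (BVtil n x)) $$ (i, l)
      = (\<Sum>m<n + 1. (\<Sum>j<n + 1. bernstein_monomial n (x i) j * C $$ (j, m)) * bernstein_monomial n (x l) m)"
    using assms
    by (auto simp: BVtil_def bernstein_monomial_def scalar_prod_def atLeast0LessThan intro!: sum.cong)
  also have "\<dots> = (\<Sum>m<n + 1. \<Sum>j<n + 1.
      C $$ (j, m) * (bernstein_monomial n (x i) j * bernstein_monomial n (x l) m))"
    by (simp only: sum_distrib_right) (intro sum.cong refl, simp only: ac_simps)
  also have "\<dots> = (\<Sum>j<n + 1. \<Sum>m<n + 1.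
      C $$ (j, m) * (bernstein_monomial n (x i) j * bernstein_monomial n (x l) m))"
    by (rule sum.swap)
  finally show ?thesis by (simp only: Suc_eq_plus1 [symmetric] lessThan_Suc_atMost)
qed

lemma Htil_Tmat_minus_Hmat_Ttil_carrier:
  "Htil n x * Tmat n - Hmat n * Ttil n x \<in> carrier_mat (n + 1) (n + 1)"
  by (intro minus_carrier_mat mult_carrier_mat[of _ _ "n + 1"]) (simp_all add: Hmat_def Ttil_def)

lemma BVtil_bezoutian_transpose_eq_diag:
  assumes "inj_on x {0..n}"
  shows "BVtil n x * (Htil n x * Tmat n - Hmat n * Ttil n x) * transpose_mat (BVtil n x)
    = mat_diag (n + 1) (\<lambda>l. \<Prod>r\<in>{0..n} - {l}. x l - x r)"
proof (rule eq_matI)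
  let ?C = "Htil n x * Tmat n - Hmat n * Ttil n x"
  note C = Htil_Tmat_minus_Hmat_Ttil_carrier[of n x]
  fix i l assume "i < dim_row (mat_diag (n + 1) (\<lambda>l. \<Prod>r\<in>{0..n} - {l}. x l - x r))"
    and "l < dim_col (mat_diag (n + 1) (\<lambda>l. \<Prod>r\<in>{0..n} - {l}. x l - x r))"
  then have il: "i < n + 1" "l < n + 1" by (auto simp: mat_diag_def)
  have "(BVtil n x * ?C * transpose_mat (BVtil n x)) $$ (i, l) = node_bezout_form n x (x i) (x l)"
    unfolding index_BVtil_mult_transpose[OF C il] node_bezout_form_def bezout_form_def
    by (intro sum.cong refl) (simp add: index_Htil_Tmat_minus_Hmat_Ttil)
  also have "\<dots> = mat_diag (n + 1) (\<lambda>l. \<Prod>r\<in>{0..n} - {l}. x l - x r) $$ (i, l)"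
    using node_bezout_form_at_nodes[OF assms, of i l] il by (simp add: mat_diag_def)
  finally show "(BVtil n x * ?C * transpose_mat (BVtil n x)) $$ (i, l) = \<dots>" .
qed (simp_all add: BVtil_def mat_diag_def)

definition BV_inverse_formula :: "nat \<Rightarrow> (nat \<Rightarrow> real) \<Rightarrow> real mat" where
  "BV_inverse_formula n x = Deltainv n * (Htil n x * Tmat n - Hmat n * Ttil n x)
     * transpose_mat (BVtil n x) * Dinv n x"

lemma BV_inverse_formula_carrier: "BV_inverse_formula n x \<in> carrier_mat (n + 1) (n + 1)"
proof -
  have "Deltainv n \<in> carrier_mat (n + 1) (n + 1)"
    and "transpose_mat (BVtil n x) \<in> carrier_mat (n + 1) (n + 1)"
    and "Dinv n x \<in> carrier_mat (n + 1) (n + 1)"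
    by (simp_all add: Deltainv_def BVtil_def Dinv_def)
  with Htil_Tmat_minus_Hmat_Ttil_carrier show ?thesis
    unfolding BV_inverse_formula_def by (blast intro: mult_carrier_mat)
qed

lemma BV_mult_inverse_formula:
  assumes "inj_on x {0..n}"
  shows "BV n x * BV_inverse_formula n x = 1\<^sub>m (n + 1)"
proof -
  let ?C = "Htil n x * Tmat n - Hmat n * Ttil n x"
  let ?W = "transpose_mat (BVtil n x)"
  have BV: "BV n x \<in> carrier_mat (n + 1) (n + 1)"
    and Delta: "Deltainv n \<in> carrier_mat (n + 1) (n + 1)"
    and W: "?W \<in> carrier_mat (n + 1) (n + 1)" and D: "Dinv n x \<in> carrier_mat (n + 1) (n + 1)"
    by (simp_all add: BV_def Deltainv_def BVtil_def Dinv_def)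
  note C = Htil_Tmat_minus_Hmat_Ttil_carrier[of n x]
  note DeltaC = mult_carrier_mat[OF Delta C]
  have nonzero: "(\<Prod>r\<in>{0..n} - {l}. x l - x r) \<noteq> 0" if "l < n + 1" for l
  proof -
    have "x l - x r \<noteq> 0" if "r \<in> {0..n} - {l}" for r
      using inj_onD[OF assms, of l r] that \<open>l < n + 1\<close> by auto
    then show ?thesis by (simp add: prod_zero_iff)
  qed
  have "BV n x * BV_inverse_formula n x = BV n x * Deltainv n * ?C * ?W * Dinv n x"
    unfolding BV_inverse_formula_def
    by (simp only: assoc_mult_mat[OF BV mult_carrier_mat[OF DeltaC W] D, symmetric]
        assoc_mult_mat[OF BV DeltaC W, symmetric] assoc_mult_mat[OF BV Delta C, symmetric])
  also have "\<dots> = mat_diag (n + 1) (\<lambda>l. \<Prod>r\<in>{0..n} - {l}. x l - x r) * Dinv n x"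
    unfolding BV_mult_Deltainv BVtil_bezoutian_transpose_eq_diag[OF assms] ..
  also have "\<dots> = 1\<^sub>m (n + 1)"
    unfolding Dinv_def mat_diag_diag
    by (rule eq_matI) (simp_all add: mat_diag_def nonzero del: prod_zero_iff)
  finally show ?thesis .
qed

lemma inj_on_if_strictly_increasing:
  fixes x :: "nat \<Rightarrow> 'a::linorder"
  assumes "\<forall>i<n. x i < x (Suc i)"
  shows "inj_on x {0..n}"
proof -
  have less: "x i < x l" if "i < l" "l \<le> n" for i l
  proof (rule lift_Suc_mono_less_ivl[of "{..<n}"])
    show "{i..<l} \<subseteq> {..<n}" using that by auto
  qed (use assms that in auto)
  show ?thesis
  proof (rule linorder_inj_onI')
    fix i j assume "i \<in> {0..n}" "j \<in> {0..n}" "i < j"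
    then show "x i \<noteq> x j" using less[of i j] by auto
  qed
qed

(* Only the distinctness of the nodes matters. *)
theorem theorem2p7:
  fixes n :: nat and x :: "nat \<Rightarrow> real"
  assumes "0 \<le> x 0" and "\<forall>i<n. x i < x (Suc i)" and "x n \<le> 1"
  shows "inverts_mat (BV n x)
           (Deltainv n * (Htil n x * Tmat n - Hmat n * Ttil n x) * transpose_mat (BVtil n x) * Dinv n x)
       \<and> inverts_mat
           (Deltainv n * (Htil n x * Tmat n - Hmat n * Ttil n x) * transpose_mat (BVtil n x) * Dinv n x)
           (BV n x)"
proof -
  have BV: "BV n x \<in> carrier_mat (n + 1) (n + 1)" by (simp add: BV_def)
  note M = BV_inverse_formula_carrier[of n x]
  have right: "BV n x * BV_inverse_formula n x = 1\<^sub>m (n + 1)"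
    by (rule BV_mult_inverse_formula[OF inj_on_if_strictly_increasing[OF assms(2)]])
  have left: "BV_inverse_formula n x * BV n x = 1\<^sub>m (n + 1)"
    by (rule mat_mult_left_right_inverse[OF BV M right])
  from right left show ?thesis
    unfolding inverts_mat_def BV_inverse_formula_def [symmetric]
      carrier_matD(1)[OF BV] carrier_matD(1)[OF M]
    by simp
qed

end
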